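(* Let $\vec d=(\vec a,\vec b)$ be a bidegree sequence of length $n$ with $\sum_i a_i=\sum_i b_i=n\bar c$ and $m:=\min\vec d\le n-1$. Define $k_*=m+1+\sqrt{(m+1)^2+n(\bar c-2m)}$, and let $k=\lceil k_*\rceil$ if $(m+1)^2+n(\bar c-2m)\ge0$ (i.e. $k_*$ is real) and $k=1$ otherwise. If $$\max\vec d\le\min\Big(\Big\lfloor n\frac{\bar c-m}{k}+m\Big\rfloor,\ n-1\Big),$$ then $\vec d$ is graphic.
   Context: A bidegree sequence of length $n$ is a pair $\vec d=(\vec a,\vec b)$ with $\vec a=(a_1,\dots,a_n)\in\mathbb{N}_0^n$ and $\vec b=(b_1,\dots,b_n)\in\mathbb{N}_0^n$. It is graphic with loops if there is an $n\times n$ matrix with entries in $\{0,1\}$ whose $i$th row sum is $a_i$ and whose $i$th column sum is $b_i$ for every $i\in[1..n]$; it is graphic if such a matrix exists with all diagonal entries equal to $0$. $\max\vec d$ and $\min\vec d$ denote the maximum and minimum over all $2n$ entries $a_1,\dots,a_n,b_1,\dots,b_n$. The number $\bar c$ (the average degree) is defined by $\sum_i a_i=\sum_i b_i=n\bar c$. *)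

theory Defs
  imports Complex_Main
begin

text \<open>A bidegree sequence of length n: two functions a b :: nat => nat, only the
values at indices 0..n-1 matter (index i corresponds to i+1 in the paper).\<close>

definition bidegree_sum :: "nat \<Rightarrow> (nat \<Rightarrow> nat) \<Rightarrow> (nat \<Rightarrow> nat) \<Rightarrow> bool" where
  "bidegree_sum n a b \<longleftrightarrow> (\<Sum>i<n. a i) = (\<Sum>i<n. b i)"

definition graphic :: "nat \<Rightarrow> (nat \<Rightarrow> nat) \<Rightarrow> (nat \<Rightarrow> nat) \<Rightarrow> bool" where
  "graphic n a b \<longleftrightarrow> (\<exists>M :: nat \<Rightarrow> nat \<Rightarrow> nat.
      (\<forall>i<n. \<forall>j<n. M i j \<in> {0, 1}) \<and> (\<forall>i<n. M i i = 0) \<and>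
      (\<forall>i<n. (\<Sum>j<n. M i j) = a i) \<and> (\<forall>j<n. (\<Sum>i<n. M i j) = b j))"

definition max_bideg :: "nat \<Rightarrow> (nat \<Rightarrow> nat) \<Rightarrow> (nat \<Rightarrow> nat) \<Rightarrow> nat" where
  "max_bideg n a b = Max (a ` {..<n} \<union> b ` {..<n})"

definition min_bideg :: "nat \<Rightarrow> (nat \<Rightarrow> nat) \<Rightarrow> (nat \<Rightarrow> nat) \<Rightarrow> nat" where
  "min_bideg n a b = Min (a ` {..<n} \<union> b ` {..<n})"

definition avg_deg :: "nat \<Rightarrow> (nat \<Rightarrow> nat) \<Rightarrow> real" where
  "avg_deg n a = real (\<Sum>i<n. a i) / real n"

end

theory Submission
  imports Defs
begin

text \<open>
  By a Fulkerson-type criterion, a bidegree sequence with equal sums is graphic as soon as every set \<open>S\<close> of rows satisfies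
  \<open>\<Sum>i\<in>S. a i \<le> \<Sum>j. min (b j) |S - {j}|\<close>: in a partial realisation of maximum size with a
  deficient row, the rows and columns reachable by alternating walks form such an \<open>S\<close> that is
  violated, since otherwise an augmenting walk would exist.

  The degree bounds give this cut inequality directly when \<open>|S| \<le> m\<close> or \<open>|S| > max d\<close>. In
  between, put \<open>x = max d - m\<close> and \<open>u = |S| - m\<close>; the estimate
  \<open>x * min (b j) d \<ge> x * m + (b j - m) * (d - m)\<close> for \<open>d = |S - {j}|\<close> reduces the cut inequality
  to one of two inequalities that are linear in \<open>u\<close>, one for each of the bounds
  \<open>\<Sum>i\<in>S. a i \<le> |S| * max d\<close> and \<open>\<Sum>i\<in>S. a i \<le> E + |S| * m\<close>, where \<open>E\<close> is the total
  excess over \<open>m\<close>. The choice of \<open>k\<close> is exactly what prevents \<open>u\<close> from violating both.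
\<close>

section \<open>A cut criterion for graphic bidegree sequences\<close>

definition outdeg :: "(nat \<times> nat) set \<Rightarrow> nat \<Rightarrow> nat" where
  "outdeg F i = card {j. (i, j) \<in> F}"

definition indeg :: "(nat \<times> nat) set \<Rightarrow> nat \<Rightarrow> nat" where
  "indeg F j = card {i. (i, j) \<in> F}"

definition off_diagonal :: "nat \<Rightarrow> (nat \<times> nat) set" where
  "off_diagonal n = {(i, j). i < n \<and> j < n \<and> i \<noteq> j}"

lemma finite_off_diagonal [simp]: "finite (off_diagonal n)"
  by (rule finite_subset[of _ "{..<n} \<times> {..<n}"]) (auto simp: off_diagonal_def)

lemma card_eq_sum_outdeg:
  assumes "F \<subseteq> A \<times> B" "finite A" "finite B"
  shows "card F = (\<Sum>i\<in>A. outdeg F i)"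
proof -
  have "F = (SIGMA i:A. {j. (i, j) \<in> F})" using assms(1) by auto
  moreover have "finite {j. (i, j) \<in> F}" for i
    using assms by (auto intro: finite_subset[of _ B])
  ultimately show ?thesis using assms(2) unfolding outdeg_def by (metis card_SigmaI)
qed

lemma card_eq_sum_indeg:
  assumes "F \<subseteq> A \<times> B" "finite A" "finite B"
  shows "card F = (\<Sum>j\<in>B. indeg F j)"
proof -
  have "card F = card (converse F)" by auto
  also have "\<dots> = (\<Sum>j\<in>B. outdeg (converse F) j)"
    using assms by (intro card_eq_sum_outdeg) auto
  finally show ?thesis by (simp add: outdeg_def indeg_def)
qed

lemma finite_row: "finite F \<Longrightarrow> finite {j. (i, j) \<in> F}"
  by (rule finite_subset[of _ "snd ` F"]) force+

lemma outdeg_insert: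
  assumes "finite F" "(p, q) \<notin> F"
  shows "outdeg (insert (p, q) F) i = outdeg F i + of_bool (i = p)"
proof (cases "i = p")
  case True
  then have "{j. (i, j) \<in> insert (p, q) F} = insert q {j. (i, j) \<in> F}" by auto
  then show ?thesis using assms True by (simp add: outdeg_def finite_row)
qed (simp add: outdeg_def)

lemma outdeg_remove:
  assumes "finite F" "(p, q) \<in> F"
  shows "outdeg (F - {(p, q)}) i + of_bool (i = p) = outdeg F i"
proof (cases "i = p")
  case True
  then have "{j. (i, j) \<in> F - {(p, q)}} = {j. (i, j) \<in> F} - {q}" by auto
  moreover have "Suc (card ({j. (i, j) \<in> F} - {q})) = card {j. (i, j) \<in> F}"
    using assms True by (intro card_Suc_Diff1) (auto simp: finite_row)
  ultimately show ?thesis using True by (simp add: outdeg_def del: card_Diff_insert)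
qed (simp add: outdeg_def)

lemma indeg_eq_outdeg_converse: "indeg F j = outdeg (converse F) j"
  by (simp add: indeg_def outdeg_def)

lemma indeg_insert:
  assumes "finite F" "(p, q) \<notin> F"
  shows "indeg (insert (p, q) F) j = indeg F j + of_bool (j = q)"
proof -
  have "converse (insert (p, q) F) = insert (q, p) (converse F)" by auto
  with assms show ?thesis by (simp add: indeg_eq_outdeg_converse outdeg_insert)
qed

lemma indeg_remove:
  assumes "finite F" "(p, q) \<in> F"
  shows "indeg (F - {(p, q)}) j + of_bool (j = q) = indeg F j"
proof -
  have "converse (F - {(p, q)}) = converse F - {(q, p)}" by auto
  with assms show ?thesis by (simp add: indeg_eq_outdeg_converse outdeg_remove)
qed

definition partial_realisation :: "nat \<Rightarrow> (nat \<Rightarrow> nat) \<Rightarrow> (nat \<Rightarrow> nat) \<Rightarrow> (nat \<times> nat) set \<Rightarrow> bool" where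
  "partial_realisation n a b F \<longleftrightarrow>
     F \<subseteq> off_diagonal n \<and> (\<forall>i<n. outdeg F i \<le> a i) \<and> (\<forall>j<n. indeg F j \<le> b j)"

lemma partial_realisation_finite: "partial_realisation n a b F \<Longrightarrow> finite F"
  unfolding partial_realisation_def using finite_off_diagonal finite_subset by blast

lemma partial_realisation_insert:
  assumes F: "partial_realisation n a b F" and ij: "(i, j) \<in> off_diagonal n" "(i, j) \<notin> F"
    and "outdeg F i < a i" "indeg F j < b j"
  shows "partial_realisation n a b (insert (i, j) F)" "card (insert (i, j) F) = Suc (card F)"
proof -
  have "finite F" using F by (rule partial_realisation_finite)
  with assms show "partial_realisation n a b (insert (i, j) F)"
    by (auto simp: partial_realisation_def outdeg_insert indeg_insert)
  show "card (insert (i, j) F) = Suc (card F)" using \<open>finite F\<close> ij by simp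
qed

lemma partial_realisation_flip:
  assumes F: "partial_realisation n a b F" and ic: "(i, c) \<in> off_diagonal n" "(i, c) \<notin> F"
    and rc: "(r, c) \<in> F" and "outdeg F i < a i"
  defines "G \<equiv> insert (i, c) (F - {(r, c)})"
  shows "partial_realisation n a b G" "card G = card F" "outdeg G r < a r" "indeg G = indeg F"
proof -
  have fin: "finite F" using F by (rule partial_realisation_finite)
  have "r \<noteq> i" using ic rc by auto
  have "r < n" using F rc by (auto simp: partial_realisation_def off_diagonal_def)
  have out: "outdeg G q + of_bool (q = r) = outdeg F q + of_bool (q = i)" for q
    using outdeg_remove[OF fin rc, of q] outdeg_insert[of "F - {(r, c)}" i c q] fin ic
    unfolding G_def by simp
  have "indeg G q = indeg F q" for q
    using indeg_remove[OF fin rc, of q] indeg_insert[of "F - {(r, c)}" i c q] fin ic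
    unfolding G_def by simp
  then show "indeg G = indeg F" ..
  moreover have "outdeg G q \<le> a q" if "q < n" for q
    using out[of q] F that \<open>outdeg F i < a i\<close> by (cases "q = i") (auto simp: partial_realisation_def)
  moreover have "G \<subseteq> off_diagonal n"
    using F ic unfolding partial_realisation_def G_def by blast
  ultimately show "partial_realisation n a b G"
    using F unfolding partial_realisation_def by simp
  show "card G = card F"
    using fin ic rc \<open>r \<noteq> i\<close> card_Suc_Diff1[OF fin rc] unfolding G_def by (simp del: card_Diff_insert)
  show "outdeg G r < a r"
    using out[of r] \<open>r \<noteq> i\<close> \<open>r < n\<close> F by (auto simp: partial_realisation_def)
qed

text \<open>An alternating walk from row \<open>i\<close> to column \<open>j\<close> alternates between pairs outside \<open>F\<close>
  (row to column) and pairs of \<open>F\<close> traversed backwards (column to row); the last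
  argument counts the latter.\<close>

inductive alternating_walk :: "nat \<Rightarrow> (nat \<times> nat) set \<Rightarrow> nat \<Rightarrow> nat \<Rightarrow> nat \<Rightarrow> bool"
  for n F where
  direct: "(i, j) \<in> off_diagonal n \<Longrightarrow> (i, j) \<notin> F \<Longrightarrow> alternating_walk n F i j 0"
| via: "(i, c) \<in> off_diagonal n \<Longrightarrow> (i, c) \<notin> F \<Longrightarrow> (r, c) \<in> F \<Longrightarrow>
    alternating_walk n F r j L \<Longrightarrow> alternating_walk n F i j (Suc L)"

lemma alternating_walk_snoc:
  assumes "alternating_walk n F i c L" "(r, c) \<in> F" "(r, j) \<in> off_diagonal n" "(r, j) \<notin> F"
  shows "alternating_walk n F i j (Suc L)"
  using assms by induction (auto intro: alternating_walk.intros)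

lemma alternating_walk_transfer:
  assumes "alternating_walk n F i j L" and agree: "\<And>p q. q \<noteq> c \<Longrightarrow> (p, q) \<in> G \<longleftrightarrow> (p, q) \<in> F"
  shows "alternating_walk n G i j L \<or> j = c \<or>
    (\<exists>r L'. L' < L \<and> (r, c) \<in> F \<and> alternating_walk n F r j L')"
  using assms(1)
proof induction
  case (direct i j)
  then show ?case using agree by (metis alternating_walk.direct)
next
  case (via i c' r j L)
  show ?case
  proof (cases "c' = c")
    case True
    then show ?thesis using via by blast
  next
    case False
    with via agree show ?thesis by (metis alternating_walk.via less_Suc_eq)
  qed
qed

text \<open>Flip the first two steps of the walk; if the rest of the walk uses the flipped column
  again, a strictly shorter walk from \<open>i\<close> exists already.\<close>

lemma augmenting_walk:
  assumes "partial_realisation n a b F" "outdeg F i < a i" "indeg F j < b j"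
    and "alternating_walk n F i j L"
  shows "\<exists>G. partial_realisation n a b G \<and> card G = Suc (card F)"
  using assms
proof (induction L arbitrary: F i rule: less_induct)
  case (less L F i)
  note F = less.prems(1) and deficient = less.prems(2,3)
  from less.prems(4) show ?case
  proof cases
    case direct
    then show ?thesis using partial_realisation_insert[OF F _ _ deficient] by blast
  next
    case (via c r L1)
    show ?thesis
    proof (cases "c = j")
      case True
      then show ?thesis using via partial_realisation_insert[OF F _ _ deficient] by blast
    next
      case False
      define G where "G = insert (i, c) (F - {(r, c)})"
      have G: "partial_realisation n a b G" "card G = card F" "outdeg G r < a r" "indeg G = indeg F"
        using partial_realisation_flip[OF F via(2,3,4) deficient(1)] unfolding G_def by blast+
      have "\<And>p q. q \<noteq> c \<Longrightarrow> (p, q) \<in> G \<longleftrightarrow> (p, q) \<in> F" unfolding G_def by auto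
      from alternating_walk_transfer[OF via(5) this] False
      consider "alternating_walk n G r j L1"
        | r' L' where "L' < L1" "(r', c) \<in> F" "alternating_walk n F r' j L'" by blast
      then show ?thesis
      proof cases
        case 1
        then show ?thesis using less.IH[of L1 G r] via G deficient by auto
      next
        case 2
        then have "alternating_walk n F i j (Suc L')" using via by (blast intro: alternating_walk.via)
        then show ?thesis using less.IH[of "Suc L'" F i] 2 via F deficient by auto
      qed
    qed
  qed
qed

lemma alternating_walk_target: "alternating_walk n F i j L \<Longrightarrow> j < n"
  by (induction rule: alternating_walk.induct) (auto simp: off_diagonal_def)

definition cut_condition :: "nat \<Rightarrow> (nat \<Rightarrow> nat) \<Rightarrow> (nat \<Rightarrow> nat) \<Rightarrow> bool" where
  "cut_condition n a b \<longleftrightarrow>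
     (\<forall>S \<subseteq> {..<n}. (\<Sum>i\<in>S. a i) \<le> (\<Sum>j<n. min (b j) (card (S - {j}))))"

lemma maximal_partial_realisation_full_rows:
  assumes F: "partial_realisation n a b F"
    and maximal: "\<And>G. partial_realisation n a b G \<Longrightarrow> card G \<le> card F"
    and cut: "cut_condition n a b" and "i0 < n"
  shows "outdeg F i0 = a i0"
proof (rule ccontr)
  assume "outdeg F i0 \<noteq> a i0"
  then have deficient: "outdeg F i0 < a i0"
    using F \<open>i0 < n\<close> by (auto simp: partial_realisation_def)
  have F_sub: "F \<subseteq> off_diagonal n" using F by (simp add: partial_realisation_def)
  define C where "C = {j. \<exists>L. alternating_walk n F i0 j L}"
  define S where "S = insert i0 {r. \<exists>c\<in>C. (r, c) \<in> F}"
  have S_sub: "S \<subseteq> {..<n}" using F_sub \<open>i0 < n\<close> by (auto simp: S_def off_diagonal_def)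
  then have "finite S" by (rule finite_subset) simp
  have C_full: "indeg F j = b j" if "j \<in> C" for j
  proof (rule ccontr)
    assume "indeg F j \<noteq> b j"
    moreover obtain L where walk: "alternating_walk n F i0 j L" using \<open>j \<in> C\<close> C_def by blast
    ultimately have "indeg F j < b j"
      using F alternating_walk_target[OF walk] by (auto simp: partial_realisation_def)
    then show False using augmenting_walk[OF F deficient _ walk] maximal by fastforce
  qed
  have S_to_outside: "(r, j) \<in> F" if "r \<in> S" "j < n" "j \<notin> C" "j \<noteq> r" for r j
  proof (rule ccontr)
    assume "(r, j) \<notin> F"
    moreover have "(r, j) \<in> off_diagonal n" using that S_sub by (auto simp: off_diagonal_def)
    ultimately have "\<exists>L. alternating_walk n F i0 j L"
      using \<open>r \<in> S\<close> unfolding S_def C_def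
      by (auto intro: alternating_walk.direct alternating_walk_snoc)
    then show False using \<open>j \<notin> C\<close> C_def by blast
  qed
  have column_bound: "min (b j) (card (S - {j})) \<le> card {r\<in>S. (r, j) \<in> F}" if "j < n" for j
  proof (cases "j \<in> C")
    case True
    then have "{r\<in>S. (r, j) \<in> F} = {r. (r, j) \<in> F}" unfolding S_def by auto
    then show ?thesis using C_full[OF True] by (simp add: indeg_def)
  next
    case False
    then have "S - {j} \<subseteq> {r\<in>S. (r, j) \<in> F}" using S_to_outside \<open>j < n\<close> by blast
    then show ?thesis using \<open>finite S\<close> by (simp add: card_mono le_trans[OF min.cobounded2])
  qed
  define FS where "FS = F \<inter> S \<times> UNIV"
  have FS_sub: "FS \<subseteq> S \<times> {..<n}" using F_sub by (auto simp: FS_def off_diagonal_def)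
  have "(\<Sum>j<n. min (b j) (card (S - {j}))) \<le> (\<Sum>j<n. indeg FS j)"
    using column_bound by (intro sum_mono) (simp add: indeg_def FS_def conj_commute)
  also have "\<dots> = card FS" using FS_sub \<open>finite S\<close> by (simp add: card_eq_sum_indeg)
  also have "\<dots> = (\<Sum>i\<in>S. outdeg FS i)" using FS_sub \<open>finite S\<close> by (simp add: card_eq_sum_outdeg)
  also have "\<dots> = (\<Sum>i\<in>S. outdeg F i)" by (intro sum.cong) (auto simp: outdeg_def FS_def)
  also have "\<dots> < (\<Sum>i\<in>S. a i)"
    using F S_sub deficient \<open>finite S\<close>
    by (intro sum_strict_mono_ex1) (auto simp: partial_realisation_def S_def)
  finally show False using cut S_sub by (auto simp: cut_condition_def not_le[symmetric])
qed

lemma graphic_if_realisation: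
  assumes "F \<subseteq> off_diagonal n" "\<forall>i<n. outdeg F i = a i" "\<forall>j<n. indeg F j = b j"
  shows "graphic n a b"
  unfolding graphic_def
proof (intro exI[of _ "\<lambda>i j. of_bool ((i, j) \<in> F)"] conjI allI impI)
  fix i j
  show "of_bool ((i, j) \<in> F) \<in> {0, 1::nat}" by simp
  show "i < n \<Longrightarrow> of_bool ((i, i) \<in> F) = (0::nat)" using assms(1) by (auto simp: off_diagonal_def)
  have row: "{..<n} \<inter> {j. (i, j) \<in> F} = {j. (i, j) \<in> F}"
    and column: "{..<n} \<inter> {i. (i, j) \<in> F} = {i. (i, j) \<in> F}"
    using assms(1) by (auto simp: off_diagonal_def)
  show "i < n \<Longrightarrow> (\<Sum>j<n. of_bool ((i, j) \<in> F)) = a i" using row assms(2) by (simp add: outdeg_def)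
  show "j < n \<Longrightarrow> (\<Sum>i<n. of_bool ((i, j) \<in> F)) = b j" using column assms(3) by (simp add: indeg_def)
qed

lemma graphic_if_cut_condition:
  assumes sums: "bidegree_sum n a b" and cut: "cut_condition n a b"
  shows "graphic n a b"
proof -
  have "partial_realisation n a b {}"
    by (simp add: partial_realisation_def outdeg_def indeg_def)
  moreover have "card G < Suc (card (off_diagonal n))" if "partial_realisation n a b G" for G
    using that by (simp add: partial_realisation_def card_mono less_Suc_eq_le)
  ultimately obtain F where F: "partial_realisation n a b F"
    and maximal: "\<And>G. partial_realisation n a b G \<Longrightarrow> card G \<le> card F"
    using Lattices_Big.ex_has_greatest_nat[of "partial_realisation n a b" "{}" card] by metis
  have F_sub: "F \<subseteq> {..<n} \<times> {..<n}"
    using F by (auto simp: partial_realisation_def off_diagonal_def)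
  have rows: "\<forall>i<n. outdeg F i = a i"
    using maximal_partial_realisation_full_rows[OF F maximal cut] by blast
  have "(\<Sum>j<n. indeg F j) = (\<Sum>j<n. b j)"
    using card_eq_sum_indeg[OF F_sub] card_eq_sum_outdeg[OF F_sub] rows sums
    by (simp add: bidegree_sum_def)
  then have "\<forall>j<n. indeg F j = b j"
    using F by (auto simp: partial_realisation_def intro: sum_mono_inv)
  with F rows show ?thesis
    by (intro graphic_if_realisation) (auto simp: partial_realisation_def)
qed

section \<open>Two polynomial inequalities\<close>

lemma mult_min_ge_mult:
  fixes p q x :: "'a::linordered_semidom"
  assumes "0 \<le> p" "p \<le> x" "0 \<le> q" "q \<le> x"
  shows "p * q \<le> x * min p q"
proof (cases "p \<le> q")
  case True
  then show ?thesis using assms mult_left_mono[of q x p] by (simp add: min_def mult.commute)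
next
  case False
  then show ?thesis using assms mult_right_mono[of p x q] by (simp add: min_def)
qed

lemma one_of_two_linear_bounds:
  fixes u v w p q :: "'a::linordered_idom"
  assumes "0 \<le> u" "0 \<le> w" "q * v \<le> p * w" "0 \<le> p \<or> 0 < v"
  shows "u * v \<le> p \<or> q \<le> u * w"
proof (rule ccontr)
  assume "\<not> ?thesis"
  then have above: "p < u * v" and below: "u * w < q" by auto
  have "0 < v"
    using assms(1,4) above by (metis mult_nonneg_nonpos not_le order.strict_trans2)
  have "p * w \<le> u * v * w" using above assms(2) by (simp add: mult_right_mono)
  also have "\<dots> < q * v" using below \<open>0 < v\<close> by (simp add: mult.commute mult.left_commute)
  finally show False using assms(3) by simp
qed

text \<open>In both inequalities below, each alternative says that the point \<open>u\<close> lies on one side of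
  a linear function; the determinant condition of \<open>one_of_two_linear_bounds\<close> is proved by
  writing \<open>p * w - q * v\<close> as a sum of nonnegative terms.\<close>

lemma cut_arith_large_excess:
  fixes m u x n E k :: int
  assumes "0 \<le> m" "0 \<le> u" "0 \<le> x" "m + x < n"
    and "k * x \<le> E" "E \<le> k\<^sup>2 - 2 * (m + 1) * k + n * m" "m + 1 \<le> k"
  shows "(m + u) * (m + x) * x + (m + u) * x \<le> n * m * x + E * u \<or>
    (E + (m + u) * m) * x + (m + u) * x \<le> n * m * x + E * u"
proof -
  define v where "v = (m + x + 1) * x - E"
  define w where "w = E - (m + 1) * x"
  define p where "p = m * x * (n - m - x - 1)"
  define q where "q = E * x + m * (m + 1) * x - n * m * x"
  have "0 \<le> p" unfolding p_def using assms(1,3,4) by simp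
  moreover have "0 \<le> w" unfolding w_def using assms(3,5,7) mult_right_mono[of "m + 1" k x] by linarith
  moreover have "q * v \<le> p * w"
  proof -
    have "0 \<le> (E - k * x) * (E + k * x - (2 * m + 1) * x)"
      using assms(3,5,7) mult_right_mono[of "2 * m + 1" "2 * k" x] by simp
    moreover have "0 \<le> x * x * (k\<^sup>2 - 2 * (m + 1) * k + n * m + k - E)"
      using assms(1,3,6,7) by (intro mult_nonneg_nonneg) auto
    ultimately have "0 \<le> x * ((E - k * x) * (E + k * x - (2 * m + 1) * x)
        + x * x * (k\<^sup>2 - 2 * (m + 1) * k + n * m + k - E))"
      using assms(3) by simp
    then show ?thesis
      unfolding p_def q_def v_def w_def by (simp add: algebra_simps power2_eq_square)
  qed
  ultimately have "u * v \<le> p \<or> q \<le> u * w"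
    using one_of_two_linear_bounds assms(2) by blast
  moreover have "n * m * x + E * u - ((m + u) * (m + x) * x + (m + u) * x) = p - u * v"
    and "n * m * x + E * u - ((E + (m + u) * m) * x + (m + u) * x) = u * w - q"
    unfolding p_def q_def v_def w_def by (simp_all add: algebra_simps)
  ultimately show ?thesis by linarith
qed

lemma cut_arith_small_excess:
  fixes m u x n E :: int
  assumes "0 \<le> m" "0 \<le> u" "u \<le> x" "1 \<le> x" "m + x < n" "(m + 1)\<^sup>2 + E < n * m"
  shows "(m + u) * (m + x) * x + E \<le> n * m * x + E * u \<or>
    (E + (m + u) * m) * x + E \<le> n * m * x + E * u"
proof -
  have slack: "0 \<le> n * m - m * m - (2 * m + 2 + E)"
    using assms(6) by (simp add: power2_eq_square algebra_simps)
  show ?thesis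
  proof (cases "E \<le> m * x")
    case True
    have "n * m * x + E * u - ((E + (m + u) * m) * x + E)
        = m * x * (n - m - x - 1) + (m * x - E) * (x + 1 - u)"
      by (simp add: algebra_simps)
    moreover have "0 \<le> m * x * (n - m - x - 1) + (m * x - E) * (x + 1 - u)"
      using True assms(1,3,4,5) by simp
    ultimately show ?thesis by linarith
  next
    case False
    define v where "v = x * x - (E - m * x)"
    define w where "w = E - m * x"
    define p where "p = n * m * x - E - m * m * x - m * x * x"
    define q where "q = E * (x + 1) + m * m * x - n * m * x"
    have "0 \<le> w" unfolding w_def using False by simp
    moreover have "q * v \<le> p * w"
    proof -
      have "p * w - q * v = x * (x * x * (n * m - m * m - (2 * m + 2 + E)) + m * x * x + x * x
          + (x - w)\<^sup>2 + x * w)"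
        unfolding p_def q_def v_def w_def by (simp add: algebra_simps power2_eq_square)
      moreover have "0 \<le> x * (x * x * (n * m - m * m - (2 * m + 2 + E)) + m * x * x + x * x
          + (x - w)\<^sup>2 + x * w)"
        using slack \<open>0 \<le> w\<close> assms(1,4) by simp
      ultimately show ?thesis by linarith
    qed
    moreover have "0 \<le> p \<or> 0 < v"
    proof (rule disjCI)
      assume "\<not> 0 < v"
      then have "0 \<le> E - x * x - m * x" unfolding v_def by simp
      moreover have "p = x * (n * m - m * m - (2 * m + 2 + E)) + (E - x * x - m * x) * (x - 1)
          + m * x + 2 * x + x * x * (x - 1)"
        unfolding p_def by (simp add: algebra_simps)
      ultimately show "0 \<le> p" using slack assms(1,4) by simp
    qed
    ultimately have "u * v \<le> p \<or> q \<le> u * w"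
      using one_of_two_linear_bounds assms(2) by blast
    moreover have "n * m * x + E * u - ((m + u) * (m + x) * x + E) = p - u * v"
      and "n * m * x + E * u - ((E + (m + u) * m) * x + E) = u * w - q"
      unfolding p_def q_def v_def w_def by (simp_all add: algebra_simps)
    ultimately show ?thesis by linarith
  qed
qed

section \<open>The cut condition under the degree bounds\<close>

lemma sum_eq_mult_plus_excess:
  fixes b :: "nat \<Rightarrow> nat"
  assumes "\<forall>j<n. m \<le> b j"
  shows "(\<Sum>j<n. b j) = n * m + (\<Sum>j<n. b j - m)"
proof -
  have "(\<Sum>j<n. b j) = (\<Sum>j<n. m + (b j - m))" using assms by (intro sum.cong) auto
  then show ?thesis by (simp add: sum.distrib)
qed

lemma column_sum_lower_bound:
  fixes b :: "nat \<Rightarrow> nat"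
  assumes b: "\<forall>j<n. m \<le> b j \<and> b j \<le> m + x" and S: "S \<subseteq> {..<n}" "card S = m + u"
    and u: "1 \<le> u" "u \<le> x"
  shows "n * m * x + (\<Sum>j<n. b j - m) * u
    \<le> x * (\<Sum>j<n. min (b j) (card (S - {j}))) + (\<Sum>j\<in>S. b j - m)"
proof -
  have column: "x * m + (b j - m) * u \<le> x * min (b j) (card (S - {j})) + of_bool (j \<in> S) * (b j - m)"
    if "j < n" for j
  proof -
    define p where "p = b j - m"
    define q where "q = card (S - {j}) - m"
    have "finite S" using S(1) finite_subset by blast
    then have q_eq: "q + of_bool (j \<in> S) = u" and "card (S - {j}) = m + q"
      using S(2) u(1) by (auto simp: q_def card_Diff_singleton_if)
    moreover have "b j = m + p" "p \<le> x" using b that by (auto simp: p_def)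
    ultimately have "x * min (b j) (card (S - {j})) = x * m + x * min p q"
      by (simp add: min_def distrib_left)
    moreover have "p * q \<le> x * min p q" using \<open>p \<le> x\<close> q_eq u(2) by (intro mult_min_ge_mult) auto
    moreover have "p * u = p * q + of_bool (j \<in> S) * p" using q_eq by (auto simp: algebra_simps)
    ultimately show ?thesis unfolding p_def by simp
  qed
  have "n * m * x + (\<Sum>j<n. b j - m) * u = (\<Sum>j<n. x * m + (b j - m) * u)"
    by (simp add: sum.distrib sum_distrib_right)
  also have "\<dots> \<le> (\<Sum>j<n. x * min (b j) (card (S - {j})) + of_bool (j \<in> S) * (b j - m))"
    using column by (intro sum_mono) simp
  also have "\<dots> = x * (\<Sum>j<n. min (b j) (card (S - {j}))) + (\<Sum>j\<in>S. b j - m)"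
    using S(1) by (simp add: sum.distrib sum_distrib_left Int_absorb1 flip: Int_def)
  finally show ?thesis .
qed

lemma cut_inequality_large_set:
  fixes a b :: "nat \<Rightarrow> nat"
  assumes "\<forall>j<n. b j \<le> M" "(\<Sum>i<n. a i) = (\<Sum>j<n. b j)" "S \<subseteq> {..<n}" "M < card S"
  shows "(\<Sum>i\<in>S. a i) \<le> (\<Sum>j<n. min (b j) (card (S - {j})))"
proof -
  have "(\<Sum>i\<in>S. a i) \<le> (\<Sum>i<n. a i)" using assms(3) by (intro sum_mono2) auto
  also have "\<dots> = (\<Sum>j<n. min (b j) (card (S - {j})))"
    unfolding assms(2)
  proof (intro sum.cong refl)
    fix j assume "j \<in> {..<n}"
    have "card S - 1 \<le> card (S - {j})" using diff_card_le_card_Diff[of "{j}" S] by simp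
    then show "b j = min (b j) (card (S - {j}))" using assms(1,4) \<open>j \<in> {..<n}\<close> by auto
  qed
  finally show ?thesis .
qed

lemma cut_inequality_small_set:
  fixes a b :: "nat \<Rightarrow> nat"
  assumes "\<forall>i<n. a i \<le> M" "\<forall>j<n. m \<le> b j" "M < n" "S \<subseteq> {..<n}" "card S \<le> m"
  shows "(\<Sum>i\<in>S. a i) \<le> (\<Sum>j<n. min (b j) (card (S - {j})))"
proof -
  have "finite S" using assms(4) finite_subset by blast
  have "(\<Sum>i\<in>S. a i) \<le> card S * M" using assms(1,4) sum_bounded_above[of S a M] by auto
  also have "\<dots> \<le> card S * (n - 1)" using assms(3) by (intro mult_le_mono2) linarith
  also have "\<dots> = (\<Sum>j<n. card (S - {j}))"
  proof -
    have indicator: "(\<Sum>j<n. of_bool (j \<in> S)) = card S"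
      using assms(4) by (simp add: inf.absorb2)
    have "card (S - {j}) + of_bool (j \<in> S) = card S" for j
      using \<open>finite S\<close> card_Suc_Diff1[of S j] by (cases "j \<in> S") simp_all
    then have "(\<Sum>j<n. card (S - {j}) + of_bool (j \<in> S)) = n * card S" by simp
    then have "(\<Sum>j<n. card (S - {j})) + card S = n * card S"
      unfolding sum.distrib indicator .
    then show ?thesis by (simp add: diff_mult_distrib2 mult.commute)
  qed
  also have "\<dots> = (\<Sum>j<n. min (b j) (card (S - {j})))"
  proof (intro sum.cong refl)
    fix j assume "j \<in> {..<n}"
    have "card (S - {j}) \<le> card S" using \<open>finite S\<close> by (simp add: card_mono)
    then show "card (S - {j}) = min (b j) (card (S - {j}))" using assms(2,5) \<open>j \<in> {..<n}\<close> by auto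
  qed
  finally show ?thesis .
qed

text \<open>The two disjuncts correspond to the cases where \<open>k\<^sub>*\<close> is real (then \<open>k = \<lceil>k\<^sub>*\<rceil>\<close>)
  and where it is not.\<close>

definition max_degree_admissible :: "nat \<Rightarrow> nat \<Rightarrow> nat \<Rightarrow> nat \<Rightarrow> bool" where
  "max_degree_admissible n m M E \<longleftrightarrow>
     (\<exists>k::int. k * int (M - m) \<le> int E \<and> int E \<le> k\<^sup>2 - 2 * (int m + 1) * k + int n * int m \<and> int m + 1 \<le> k)
     \<or> (int m + 1)\<^sup>2 + int E < int n * int m"

lemma cut_inequality_middle_set:
  fixes a b :: "nat \<Rightarrow> nat"
  assumes bounds: "\<forall>i<n. m \<le> a i \<and> a i \<le> M \<and> m \<le> b i \<and> b i \<le> M"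
    and sums: "(\<Sum>i<n. a i) = (\<Sum>j<n. b j)" and "M < n"
    and admissible: "max_degree_admissible n m M (\<Sum>j<n. b j - m)"
    and S: "S \<subseteq> {..<n}" "m < card S" "card S \<le> M"
  shows "(\<Sum>i\<in>S. a i) \<le> (\<Sum>j<n. min (b j) (card (S - {j})))"
proof -
  define E where "E = (\<Sum>j<n. b j - m)"
  define x where "x = M - m"
  define u where "u = card S - m"
  define A where "A = (\<Sum>i\<in>S. a i)"
  define B where "B = (\<Sum>j\<in>S. b j - m)"
  define R where "R = (\<Sum>j<n. min (b j) (card (S - {j})))"
  have "finite S" using S(1) finite_subset by blast
  have card_S: "card S = m + u" "card S \<le> n" and M: "M = m + x" "1 \<le> u" "u \<le> x"
    using S \<open>M < n\<close> by (auto simp: u_def x_def)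
  have sum_b: "(\<Sum>j<n. b j) = n * m + E"
    unfolding E_def using bounds by (intro sum_eq_mult_plus_excess) auto
  have A_le_max: "A \<le> card S * M"
    using bounds S(1) sum_bounded_above[of S a M] by (auto simp: A_def)
  have A_le_excess: "A \<le> E + card S * m"
  proof -
    have "(n - card S) * m \<le> (\<Sum>i\<in>{..<n} - S. a i)"
      using bounds S(1) \<open>finite S\<close> sum_bounded_below[of "{..<n} - S" m a]
      by (auto simp: card_Diff_subset)
    moreover have "(\<Sum>i<n. a i) = A + (\<Sum>i\<in>{..<n} - S. a i)"
      using S(1) by (simp add: A_def sum.subset_diff)
    ultimately have "A + (n - card S) * m \<le> n * m + E" using sums sum_b by linarith
    then show ?thesis using card_S(2) by (simp add: diff_mult_distrib)
  qed
  have B_le_excess: "B \<le> E"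
    unfolding B_def E_def using S(1) by (intro sum_mono2) auto
  have B_le_max: "B \<le> card S * x"
  proof -
    have "b j - m \<le> x" if "j \<in> S" for j
      using bounds that S(1) by (force simp: x_def intro: diff_le_mono)
    then show ?thesis using sum_bounded_above[of S "\<lambda>j. b j - m" x] by (simp add: B_def)
  qed
  have columns: "n * m * x + E * u \<le> x * R + B"
    unfolding E_def R_def B_def using bounds S(1) card_S(1) M
    by (intro column_sum_lower_bound) auto
  have mx_n: "int m + int x < int n" using \<open>M < n\<close> M by simp
  have A_le: "int A * int x \<le> (int m + int u) * (int m + int x) * int x"
    "int A * int x \<le> (int E + (int m + int u) * int m) * int x"
    using A_le_max A_le_excess card_S M by (auto intro!: mult_right_mono simp flip: of_nat_add of_nat_mult)
  have B_le: "int B \<le> (int m + int u) * int x" "int B \<le> int E"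
    using B_le_max B_le_excess card_S by (simp_all flip: of_nat_add of_nat_mult)
  from admissible consider
      (large) k where "k * int x \<le> int E" "int E \<le> k\<^sup>2 - 2 * (int m + 1) * k + int n * int m"
        "int m + 1 \<le> k"
    | (small) "(int m + 1)\<^sup>2 + int E < int n * int m"
    unfolding max_degree_admissible_def E_def[symmetric] x_def[symmetric] by blast
  then have "int A * int x + int B \<le> int n * int m * int x + int E * int u"
  proof cases
    case large
    from cut_arith_large_excess[OF of_nat_0_le_iff of_nat_0_le_iff[of u] of_nat_0_le_iff mx_n large]
    show ?thesis using A_le B_le by linarith
  next
    case small
    have "int u \<le> int x" "1 \<le> int x" using M(2,3) by simp_all
    from cut_arith_small_excess[OF of_nat_0_le_iff of_nat_0_le_iff this mx_n small]
    show ?thesis using A_le B_le by linarith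
  qed
  then have "A * x + B \<le> n * m * x + E * u"
    by (simp only: of_nat_mult[symmetric] of_nat_add[symmetric] of_nat_le_iff)
  with columns have "A * x \<le> R * x" using mult.commute[of x R] by linarith
  then show ?thesis using M(2,3) unfolding A_def R_def by simp
qed

lemma cut_condition_if_degree_bounds:
  fixes a b :: "nat \<Rightarrow> nat"
  assumes bounds: "\<forall>i<n. m \<le> a i \<and> a i \<le> M \<and> m \<le> b i \<and> b i \<le> M"
    and sums: "(\<Sum>i<n. a i) = (\<Sum>j<n. b j)" and "M < n"
    and admissible: "max_degree_admissible n m M (\<Sum>j<n. b j - m)"
  shows "cut_condition n a b"
  unfolding cut_condition_def
proof (intro allI impI)
  fix S assume S: "S \<subseteq> {..<n}"
  consider "M < card S" | "card S \<le> m" | "m < card S" "card S \<le> M" by linarith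
  then show "(\<Sum>i\<in>S. a i) \<le> (\<Sum>j<n. min (b j) (card (S - {j})))"
  proof cases
    case 1
    then show ?thesis using bounds sums S by (intro cut_inequality_large_set) auto
  next
    case 2
    then show ?thesis using bounds \<open>M < n\<close> S by (intro cut_inequality_small_set) auto
  next
    case 3
    then show ?thesis using cut_inequality_middle_set[OF bounds sums \<open>M < n\<close> admissible S] by blast
  qed
qed

lemma max_degree_admissible_if_floor_bound:
  fixes n m M E :: nat
  assumes "m \<le> M" and D: "D = (real m + 1)\<^sup>2 + real E - real n * real m"
    and bound: "int M \<le> \<lfloor>real E / (if 0 \<le> D then real_of_int \<lceil>real m + 1 + sqrt D\<rceil> else 1) + real m\<rfloor>"
  shows "max_degree_admissible n m M E"
proof (cases "0 \<le> D")
  case True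
  define k where "k = \<lceil>real m + 1 + sqrt D\<rceil>"
  have k_ge: "real m + 1 + sqrt D \<le> real_of_int k" unfolding k_def by (rule le_of_int_ceiling)
  have "0 \<le> sqrt D" using True by simp
  with k_ge have "int m + 1 \<le> k" by linarith
  from k_ge \<open>0 \<le> sqrt D\<close> have "0 < real_of_int k" by linarith
  have "real M \<le> real E / real_of_int k + real m"
    using bound unfolding if_P[OF True] k_def[symmetric] le_floor_iff by simp
  then have "real_of_int (k * int (M - m)) \<le> real_of_int (int E)"
    using \<open>0 < real_of_int k\<close> \<open>m \<le> M\<close> by (simp add: field_simps of_nat_diff)
  then have "k * int (M - m) \<le> int E" by (simp only: of_int_le_iff)
  moreover have "sqrt D \<le> real_of_int k - real m - 1" using k_ge by linarith
  then have "(sqrt D)\<^sup>2 \<le> (real_of_int k - real m - 1)\<^sup>2"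
    using \<open>0 \<le> sqrt D\<close> by (rule power_mono)
  then have "real_of_int (int E) \<le> real_of_int (k\<^sup>2 - 2 * (int m + 1) * k + int n * int m)"
    using D True by (simp add: power2_eq_square algebra_simps)
  then have "int E \<le> k\<^sup>2 - 2 * (int m + 1) * k + int n * int m" by (simp only: of_int_le_iff)
  ultimately show ?thesis using \<open>int m + 1 \<le> k\<close> unfolding max_degree_admissible_def by blast
next
  case False
  then have "real_of_int ((int m + 1)\<^sup>2 + int E) < real_of_int (int n * int m)" using D by simp
  then have "(int m + 1)\<^sup>2 + int E < int n * int m" by (simp only: of_int_less_iff)
  then show ?thesis unfolding max_degree_admissible_def by blast
qed

lemma bideg_bounds:
  "i < n \<Longrightarrow> min_bideg n a b \<le> a i \<and> a i \<le> max_bideg n a b \<and>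
     min_bideg n a b \<le> b i \<and> b i \<le> max_bideg n a b"
  by (simp add: min_bideg_def max_bideg_def)

lemma avg_deg_excess:
  assumes "n \<ge> 1" "bidegree_sum n a b" "\<forall>j<n. m \<le> b j"
  shows "real n * (avg_deg n a - real m) = real (\<Sum>j<n. b j - m)"
proof -
  define E where "E = (\<Sum>j<n. b j - m)"
  have "(\<Sum>i<n. a i) = n * m + E"
    using assms(2,3) unfolding bidegree_sum_def E_def by (simp add: sum_eq_mult_plus_excess)
  moreover have "real n * avg_deg n a = real (\<Sum>i<n. a i)" using assms(1) by (simp add: avg_deg_def)
  ultimately show ?thesis unfolding E_def[symmetric] by (simp add: algebra_simps)
qed

theorem theorem6:
  fixes n :: nat and a b :: "nat \<Rightarrow> nat"
  assumes "n \<ge> 1"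
    and "bidegree_sum n a b"
    and "min_bideg n a b \<le> n - 1"
    and "max_bideg n a b \<le>
      min (let m = real (min_bideg n a b); c = avg_deg n a;
               D = (m + 1)\<^sup>2 + real n * (c - 2 * m);
               k = (if D \<ge> 0 then real_of_int \<lceil>m + 1 + sqrt D\<rceil> else 1)
           in \<lfloor>real n * (c - m) / k + m\<rfloor>) (int n - 1)"
  shows "graphic n a b"
proof -
  define m where "m = min_bideg n a b"
  define M where "M = max_bideg n a b"
  define E where "E = (\<Sum>j<n. b j - m)"
  have bounds: "\<forall>i<n. m \<le> a i \<and> a i \<le> M \<and> m \<le> b i \<and> b i \<le> M"
    unfolding m_def M_def using bideg_bounds by blast
  then have "m \<le> M" using \<open>n \<ge> 1\<close> by force
  define D where "D = (real m + 1)\<^sup>2 + real E - real n * real m"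
  have excess: "real n * (avg_deg n a - real m) = real E"
    unfolding E_def using assms(1,2) bounds by (intro avg_deg_excess) auto
  then have average: "(real m + 1)\<^sup>2 + real n * (avg_deg n a - 2 * real m) = D"
    unfolding D_def by (simp add: algebra_simps)
  from assms(4) have "int M \<le> int n - 1"
    and "int M \<le> \<lfloor>real E / (if 0 \<le> D then real_of_int \<lceil>real m + 1 + sqrt D\<rceil> else 1) + real m\<rfloor>"
    unfolding Let_def m_def[symmetric] M_def[symmetric] excess average min.bounded_iff by blast+
  then have "M < n" and "max_degree_admissible n m M E"
    using \<open>m \<le> M\<close> D_def by (auto intro: max_degree_admissible_if_floor_bound)
  then show ?thesis
    using assms(2) bounds unfolding E_def
    by (intro graphic_if_cut_condition cut_condition_if_degree_bounds) (auto simp: bidegree_sum_def)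
qed

end
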